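(* Let $(A,\to,1)$ be an algebra of type $(2,0)$ satisfying (Re), (M) and (Ex). Then the properties (B), (BB) and ( * ) are pairwise equivalent for $(A,\to,1)$.
   Context: Properties, required for all $x,y,z\in A$: (Re) $x\to x=1$; (M) $1\to x=x$; (Ex) $x\to(y\to z)=y\to(x\to z)$; (B) $(y\to z)\to((x\to y)\to(x\to z))=1$; (BB) $(y\to z)\to((z\to x)\to(y\to x))=1$; ( * ) $y\to z=1$ implies $(x\to y)\to(x\to z)=1$. *)

theory Defs
  imports Main
begin

definition alg20 :: "'a set \<Rightarrow> ('a \<Rightarrow> 'a \<Rightarrow> 'a) \<Rightarrow> 'a \<Rightarrow> bool" where
  "alg20 A imp one \<longleftrightarrow> one \<in> A \<and> (\<forall>x\<in>A. \<forall>y\<in>A. imp x y \<in> A)"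

definition prop_Re :: "'a set \<Rightarrow> ('a \<Rightarrow> 'a \<Rightarrow> 'a) \<Rightarrow> 'a \<Rightarrow> bool" where
  "prop_Re A imp one \<longleftrightarrow> (\<forall>x\<in>A. imp x x = one)"

definition prop_M :: "'a set \<Rightarrow> ('a \<Rightarrow> 'a \<Rightarrow> 'a) \<Rightarrow> 'a \<Rightarrow> bool" where
  "prop_M A imp one \<longleftrightarrow> (\<forall>x\<in>A. imp one x = x)"

definition prop_Ex :: "'a set \<Rightarrow> ('a \<Rightarrow> 'a \<Rightarrow> 'a) \<Rightarrow> 'a \<Rightarrow> bool" where
  "prop_Ex A imp one \<longleftrightarrow> (\<forall>x\<in>A. \<forall>y\<in>A. \<forall>z\<in>A. imp x (imp y z) = imp y (imp x z))"

definition prop_B :: "'a set \<Rightarrow> ('a \<Rightarrow> 'a \<Rightarrow> 'a) \<Rightarrow> 'a \<Rightarrow> bool" where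
  "prop_B A imp one \<longleftrightarrow>
     (\<forall>x\<in>A. \<forall>y\<in>A. \<forall>z\<in>A. imp (imp y z) (imp (imp x y) (imp x z)) = one)"

definition prop_BB :: "'a set \<Rightarrow> ('a \<Rightarrow> 'a \<Rightarrow> 'a) \<Rightarrow> 'a \<Rightarrow> bool" where
  "prop_BB A imp one \<longleftrightarrow>
     (\<forall>x\<in>A. \<forall>y\<in>A. \<forall>z\<in>A. imp (imp y z) (imp (imp z x) (imp y x)) = one)"

definition prop_star :: "'a set \<Rightarrow> ('a \<Rightarrow> 'a \<Rightarrow> 'a) \<Rightarrow> 'a \<Rightarrow> bool" where
  "prop_star A imp one \<longleftrightarrow>
     (\<forall>x\<in>A. \<forall>y\<in>A. \<forall>z\<in>A. imp y z = one \<longrightarrow> imp (imp x y) (imp x z) = one)"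

end

theory Submission
  imports Defs
begin

text \<open>(Ex) lets the two antecedents of (B) be swapped, and the swapped form is (BB) up to
renaming of variables. (B) gives (*) by (M), since an antecedent equal to 1 can be discharged.
Conversely, (Re) and (Ex) give \<open>y \<rightarrow> ((y \<rightarrow> z) \<rightarrow> z) = 1\<close>; applying (*) to this and moving
\<open>y \<rightarrow> z\<close> to the front by (Ex) yields (B).\<close>

lemma alg20_closed: "alg20 A imp one \<Longrightarrow> x \<in> A \<Longrightarrow> y \<in> A \<Longrightarrow> imp x y \<in> A"
  unfolding alg20_def by blast

lemma prop_ReD: "prop_Re A imp one \<Longrightarrow> x \<in> A \<Longrightarrow> imp x x = one"
  unfolding prop_Re_def by blast

lemma prop_MD: "prop_M A imp one \<Longrightarrow> x \<in> A \<Longrightarrow> imp one x = x"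
  unfolding prop_M_def by blast

lemma prop_ExD:
  "prop_Ex A imp one \<Longrightarrow> x \<in> A \<Longrightarrow> y \<in> A \<Longrightarrow> z \<in> A \<Longrightarrow> imp x (imp y z) = imp y (imp x z)"
  unfolding prop_Ex_def by blast

lemma prop_B_iff_swapped:
  assumes "alg20 A imp one" and "prop_Ex A imp one"
  shows "prop_B A imp one \<longleftrightarrow>
    (\<forall>x\<in>A. \<forall>y\<in>A. \<forall>z\<in>A. imp (imp x y) (imp (imp y z) (imp x z)) = one)"
proof -
  have "imp (imp y z) (imp (imp x y) (imp x z)) = imp (imp x y) (imp (imp y z) (imp x z))"
    if "x \<in> A" "y \<in> A" "z \<in> A" for x y z
    using that by (intro prop_ExD[OF assms(2)] alg20_closed[OF assms(1)])
  then show ?thesis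
    unfolding prop_B_def by (metis (no_types, lifting))
qed

lemma prop_B_iff_prop_BB:
  assumes "alg20 A imp one" and "prop_Ex A imp one"
  shows "prop_B A imp one \<longleftrightarrow> prop_BB A imp one"
  unfolding prop_B_iff_swapped[OF assms] prop_BB_def by blast

lemma prop_B_imp_prop_star:
  assumes "alg20 A imp one" and "prop_M A imp one" and "prop_B A imp one"
  shows "prop_star A imp one"
  unfolding prop_star_def
proof (intro ballI impI)
  fix x y z
  assume xyz: "x \<in> A" "y \<in> A" "z \<in> A" and "imp y z = one"
  then have "imp one (imp (imp x y) (imp x z)) = one"
    using assms(3) unfolding prop_B_def by metis
  then show "imp (imp x y) (imp x z) = one"
    using xyz by (simp add: prop_MD[OF assms(2)] alg20_closed[OF assms(1)])
qed

lemma prop_star_imp_prop_B: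
  assumes alg: "alg20 A imp one" and re: "prop_Re A imp one" and ex: "prop_Ex A imp one"
    and star: "prop_star A imp one"
  shows "prop_B A imp one"
  unfolding prop_B_iff_swapped[OF alg ex]
proof (intro ballI)
  fix x y z
  assume xyz: "x \<in> A" "y \<in> A" "z \<in> A"
  note closed = alg20_closed[OF alg]
  have "imp y (imp (imp y z) z) = imp (imp y z) (imp y z)"
    using xyz by (intro prop_ExD[OF ex] closed)
  also have "\<dots> = one"
    using xyz by (intro prop_ReD[OF re] closed)
  finally have "imp (imp x y) (imp x (imp (imp y z) z)) = one"
    using star xyz closed unfolding prop_star_def by blast
  moreover have "imp x (imp (imp y z) z) = imp (imp y z) (imp x z)"
    using xyz by (intro prop_ExD[OF ex] closed)
  ultimately show "imp (imp x y) (imp (imp y z) (imp x z)) = one"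
    by simp
qed

theorem theorem2p2:
  fixes A :: "'a set" and imp :: "'a \<Rightarrow> 'a \<Rightarrow> 'a" and one :: 'a
  assumes "alg20 A imp one"
    and "prop_Re A imp one" and "prop_M A imp one" and "prop_Ex A imp one"
  shows "(prop_B A imp one \<longleftrightarrow> prop_BB A imp one)
       \<and> (prop_BB A imp one \<longleftrightarrow> prop_star A imp one)
       \<and> (prop_B A imp one \<longleftrightarrow> prop_star A imp one)"
proof -
  have "prop_B A imp one \<longleftrightarrow> prop_star A imp one"
    using prop_B_imp_prop_star[OF assms(1,3)] prop_star_imp_prop_B[OF assms(1,2,4)] by blast
  moreover have "prop_B A imp one \<longleftrightarrow> prop_BB A imp one"
    using assms(1,4) by (rule prop_B_iff_prop_BB)
  ultimately show ?thesis
    by blast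
qed

end
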